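(* For every integer $k\ge 1$ there is a polynomial $D_k$ of degree exactly $2k-2$ such that $d_k(n)=D_k(n)$ for all integers $n\ge 1$; and for every integer $k\ge 2$ there is a polynomial $S_k$ of degree exactly $2k-3$ such that $s_k(n)=S_k(n)$ for all integers $n\ge 1$.
   Context: For $n\ge 1$, the $2\times n$ board consists of $2n$ unit squares arranged in 2 rows and $n$ columns; two squares are adjacent iff they share an edge. A piece is a nonempty set of squares that is connected under adjacency. A division of the board into $k$ pieces is a partition of the set of all $2n$ squares into exactly $k$ pieces. $d_k(n)$ denotes the number of divisions of the $2\times n$ board into $k$ pieces. $s_k(n)$ denotes the number of such divisions in which the two squares of the rightmost column lie in different pieces. *)

theory Defs
  imports Complex_Main "HOL-Library.Disjoint_Sets" "HOL-Computational_Algebra.Polynomial"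
begin

definition board :: "nat \<Rightarrow> (nat \<times> nat) set" where
  "board n = {0, 1} \<times> {0..<n}"

definition adjacent :: "nat \<times> nat \<Rightarrow> nat \<times> nat \<Rightarrow> bool" where
  "adjacent a b \<longleftrightarrow>
     (fst a = fst b \<and> (snd a = snd b + 1 \<or> snd b = snd a + 1)) \<or>
     (snd a = snd b \<and> (fst a = fst b + 1 \<or> fst b = fst a + 1))"

definition is_piece :: "(nat \<times> nat) set \<Rightarrow> bool" where
  "is_piece P \<longleftrightarrow> P \<noteq> {} \<and>
     (\<forall>x\<in>P. \<forall>y\<in>P. (\<lambda>a b. a \<in> P \<and> b \<in> P \<and> adjacent a b)\<^sup>*\<^sup>* x y)"

definition divisions :: "nat \<Rightarrow> nat \<Rightarrow> (nat \<times> nat) set set set" where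
  "divisions k n = {Q. partition_on (board n) Q \<and> (\<forall>P\<in>Q. is_piece P) \<and> card Q = k}"

definition d :: "nat \<Rightarrow> nat \<Rightarrow> nat" where
  "d k n = card (divisions k n)"

definition s :: "nat \<Rightarrow> nat \<Rightarrow> nat" where
  "s k n = card {Q \<in> divisions k n.
      \<not> (\<exists>P\<in>Q. (0, n - 1) \<in> P \<and> (1, n - 1) \<in> P)}"

end

theory Submission
  imports Defs
begin

text \<open>Removing the last column of a division of the \<open>2 \<times> (n + 2)\<close> board leaves a division of the
  \<open>2 \<times> (n + 1)\<close> board, and every division arises in this way from exactly one shorter division
  by distributing the two new squares among new pieces and the pieces through \<open>(0, n)\<close> and
  \<open>(1, n)\<close>. Counting these extensions, separately for a joined and a split last column, gives
  for \<open>n \<ge> 1\<close>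
    \<open>s\<^sub>k(n + 1) = s\<^sub>k(n) + d\<^sub>k\<^sub>-\<^sub>2(n) + 2 d\<^sub>k\<^sub>-\<^sub>1(n)\<close> and
    \<open>d\<^sub>k(n + 1) = s\<^sub>k(n + 1) + d\<^sub>k\<^sub>-\<^sub>1(n) + d\<^sub>k(n) + s\<^sub>k(n)\<close>.
  Since \<open>d\<^sub>0 = 0\<close> and \<open>d\<^sub>1\<close> is constant, induction on \<open>k\<close> exhibits \<open>s\<^sub>k\<close> and \<open>d\<^sub>k - s\<^sub>k\<close> as
  discrete antiderivatives of sequences given by polynomials of degree \<open>2k - 4\<close> and \<open>2k - 3\<close>
  with positive leading coefficients, and summing a polynomial raises its degree by one.\<close>

lemma poly_binomial_difference:
  "poly (\<Sum>i<N. monom (of_nat (N choose i)) i) x = (x + 1) ^ N - x ^ N"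
  for x :: "'a::comm_ring_1"
proof -
  have "(x + 1) ^ N = (\<Sum>i\<le>N. of_nat (N choose i) * x ^ i)"
    using binomial_ring[of x 1 N] by simp
  also have "\<dots> = (\<Sum>i<N. of_nat (N choose i) * x ^ i) + x ^ N"
    by (simp add: lessThan_Suc_atMost[symmetric])
  finally show ?thesis
    by (simp add: poly_sum poly_monom)
qed

lemma coeff_binomial_difference:
  "coeff (\<Sum>i<N. monom (of_nat (N choose i)) i :: 'a::comm_ring_1 poly) j =
     (if j < N then of_nat (N choose j) else 0)"
  by (simp add: coeff_sum coeff_monom)

text \<open>Induction on the degree: subtracting a multiple of \<open>(x + 1)^(m+1) - x^(m+1)\<close> kills
  the top coefficient of \<open>p\<close>, and \<open>x^(m+1)\<close> is an antidifference of that multiple.\<close>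
lemma poly_antidifference:
  fixes p :: "'a::field_char_0 poly"
  assumes "degree p \<le> m"
  shows "\<exists>q. degree q \<le> Suc m \<and> coeff q (Suc m) = coeff p m / of_nat (Suc m) \<and>
             (\<forall>x. poly q (x + 1) - poly q x = poly p x)"
  using assms
proof (induction m arbitrary: p)
  case 0
  then have p: "p = [:coeff p 0:]"
    using degree_0_id[of p] by simp
  have "poly p x = coeff p 0" for x
    by (subst p) simp
  then show ?case
    by (intro exI[of _ "[:0, coeff p 0:]"]) (simp add: algebra_simps)
next
  case (Suc m)
  define N where "N = Suc (Suc m)"
  define B :: "'a poly" where "B = (\<Sum>i<N. monom (of_nat (N choose i)) i)"
  define c where "c = coeff p (Suc m) / of_nat N"
  define r where "r = p - smult c B"
  have coeff_B: "coeff B j = (if j < N then of_nat (N choose j) else 0)" for j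
    unfolding B_def by (rule coeff_binomial_difference)
  have "degree B \<le> Suc m"
    by (rule degree_le) (simp add: coeff_B N_def)
  then have "degree (smult c B) \<le> Suc m"
    using degree_smult_le order.trans by blast
  then have "degree r \<le> Suc m"
    unfolding r_def using degree_diff_le Suc.prems by blast
  moreover have "coeff r (Suc m) = 0"
  proof -
    have "of_nat N \<noteq> (0::'a)"
      unfolding N_def by (rule of_nat_neq_0)
    then show ?thesis
      by (simp add: r_def coeff_B c_def N_def del: of_nat_Suc)
  qed
  ultimately have "degree r \<le> m"
    using eq_zero_or_degree_less[of r "Suc m"] by auto
  then obtain q where q: "degree q \<le> Suc m" "\<forall>x. poly q (x + 1) - poly q x = poly r x"
    using Suc.IH by blast
  let ?q = "smult c (monom 1 N) + q"
  have "degree (smult c (monom 1 N)) \<le> Suc (Suc m)"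
    unfolding N_def using degree_smult_le degree_monom_le order.trans by blast
  then have "degree ?q \<le> Suc (Suc m)"
    using degree_add_le q(1) le_SucI by blast
  moreover have "coeff ?q (Suc (Suc m)) = coeff p (Suc m) / of_nat (Suc (Suc m))"
    using coeff_eq_0[of q "Suc (Suc m)"] q(1) by (simp add: N_def c_def)
  moreover have "poly ?q (x + 1) - poly ?q x = poly p x" for x
  proof -
    have "poly ?q (x + 1) - poly ?q x = c * ((x + 1) ^ N - x ^ N) + (poly q (x + 1) - poly q x)"
      by (simp add: poly_monom algebra_simps)
    also have "\<dots> = poly p x"
      using q(2) poly_binomial_difference[of N x] by (simp add: r_def B_def)
    finally show ?thesis .
  qed
  ultimately show ?case by blast
qed

lemma polynomial_summation:
  fixes f :: "nat \<Rightarrow> 'a::field_char_0" and p :: "'a poly"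
  assumes step: "\<And>n. n \<ge> n\<^sub>0 \<Longrightarrow> f (Suc n) = f n + poly p (of_nat n)" and "p \<noteq> 0"
  shows "\<exists>q. degree q = Suc (degree p) \<and> lead_coeff q = lead_coeff p / of_nat (Suc (degree p)) \<and>
             (\<forall>n\<ge>n\<^sub>0. f n = poly q (of_nat n))"
proof -
  obtain q where q: "degree q \<le> Suc (degree p)"
      "coeff q (Suc (degree p)) = lead_coeff p / of_nat (Suc (degree p))"
      "\<forall>x. poly q (x + 1) - poly q x = poly p x"
    using poly_antidifference[OF order_refl] by blast
  have "coeff q (Suc (degree p)) \<noteq> 0"
    using q(2) \<open>p \<noteq> 0\<close> by (simp del: of_nat_Suc)
  then have deg: "degree q = Suc (degree p)"
    using q(1) le_degree by (metis antisym)
  define q' where "q' = q + [:f n\<^sub>0 - poly q (of_nat n\<^sub>0):]"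
  have "f n = poly q' (of_nat n)" if "n \<ge> n\<^sub>0" for n
    using that
  proof (induction n rule: dec_induct)
    case (step n)
    then show ?case
      using assms(1)[of n] q(3)[rule_format, of "of_nat n"] by (simp add: q'_def algebra_simps)
  qed (simp add: q'_def)
  moreover have deg': "degree q' = Suc (degree p)"
    using deg by (simp add: q'_def degree_add_eq_left)
  moreover have "lead_coeff q' = coeff q (Suc (degree p))"
    unfolding deg' by (simp add: q'_def)
  ultimately show ?thesis
    using q(2) by metis
qed

text \<open>The leading coefficient is kept positive so that adding such sequences never cancels the
  top degree.\<close>
definition poly_seq :: "(nat \<Rightarrow> real) \<Rightarrow> nat \<Rightarrow> bool" where
  "poly_seq f m \<longleftrightarrow>
     (\<exists>P. degree P = m \<and> lead_coeff P > 0 \<and> (\<forall>n\<ge>1. f n = poly P (real n)))"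

lemma poly_seq_const: "c > 0 \<Longrightarrow> poly_seq (\<lambda>_. c) 0"
  unfolding poly_seq_def by (intro exI[of _ "[:c:]"]) simp

lemma poly_seq_cong: "poly_seq f m \<Longrightarrow> (\<And>n. n \<ge> 1 \<Longrightarrow> f n = g n) \<Longrightarrow> poly_seq g m"
  unfolding poly_seq_def by metis

lemma poly_seq_scale:
  assumes "poly_seq f m" "c > 0"
  shows "poly_seq (\<lambda>n. c * f n) m"
proof -
  obtain P where "degree P = m" "lead_coeff P > 0" "\<forall>n\<ge>1. f n = poly P (real n)"
    using assms(1) unfolding poly_seq_def by blast
  with assms(2) show ?thesis
    unfolding poly_seq_def by (intro exI[of _ "smult c P"]) simp
qed

lemma poly_seq_add:
  assumes "poly_seq f m" "poly_seq g m'"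
  shows "poly_seq (\<lambda>n. f n + g n) (max m m')"
proof -
  obtain P where P: "degree P = m" "lead_coeff P > 0" "\<forall>n\<ge>1. f n = poly P (real n)"
    using assms(1) unfolding poly_seq_def by blast
  obtain Q where Q: "degree Q = m'" "lead_coeff Q > 0" "\<forall>n\<ge>1. g n = poly Q (real n)"
    using assms(2) unfolding poly_seq_def by blast
  have "degree (P + Q) = max m m' \<and> lead_coeff (P + Q) > 0"
  proof (cases m m' rule: linorder_cases)
    case less
    then show ?thesis using P Q by (simp add: degree_add_eq_right coeff_eq_0)
  next
    case equal
    then have "coeff (P + Q) m = lead_coeff P + lead_coeff Q"
      using P(1) Q(1) by simp
    moreover have "degree (P + Q) \<le> m"
      using degree_add_le[of P m Q] P(1) Q(1) equal by simp
    ultimately show ?thesis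
      using P(2) Q(2) equal by (metis add_pos_pos le_degree le_antisym less_irrefl max.idem)
  next
    case greater
    then show ?thesis
      using P Q by (simp add: degree_add_eq_left coeff_eq_0)
  qed
  moreover have "\<forall>n\<ge>1. f n + g n = poly (P + Q) (real n)"
    using P(3) Q(3) by simp
  ultimately show ?thesis
    unfolding poly_seq_def by blast
qed

lemma poly_seq_summation:
  assumes step: "\<And>n. n \<ge> 1 \<Longrightarrow> f (Suc n) = f n + g n" and "poly_seq g m"
  shows "poly_seq f (Suc m)"
proof -
  obtain P where P: "degree P = m" "lead_coeff P > 0" "\<forall>n\<ge>1. g n = poly P (real n)"
    using assms(2) unfolding poly_seq_def by blast
  have "\<And>n. n \<ge> 1 \<Longrightarrow> f (Suc n) = f n + poly P (of_nat n)"
    using step P(3) by simp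
  from polynomial_summation[OF this] obtain Q where
    "degree Q = Suc (degree P)" "lead_coeff Q = lead_coeff P / of_nat (Suc (degree P))"
    "\<forall>n\<ge>1. f n = poly Q (of_nat n)"
    using P(2) by fastforce
  with P show ?thesis
    unfolding poly_seq_def by (intro exI[of _ Q]) simp
qed

definition column :: "nat \<Rightarrow> (nat \<times> nat) set" where
  "column m = {(0, m), (1, m)}"

lemma mem_column: "i \<le> 1 \<Longrightarrow> (i, m) \<in> column m"
  by (cases i) (auto simp: column_def)

lemma board_Suc: "board (Suc m) = board m \<union> column m"
  by (auto simp: board_def column_def)

lemma board_Int_column: "board m \<inter> column m = {}"
  by (auto simp: board_def column_def)

lemma finite_board: "finite (board m)"
  by (simp add: board_def)

lemma adjacent_sym: "adjacent x y \<Longrightarrow> adjacent y x"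
  by (auto simp: adjacent_def)

lemma adjacent_into_column:
  assumes "y \<in> board (Suc (Suc n))" "y \<notin> column (Suc n)" "y' \<in> column (Suc n)" "adjacent y y'"
  shows "\<exists>i. y = (i, n) \<and> y' = (i, Suc n)"
  using assms by (auto simp: board_def column_def adjacent_def)

abbreviation path_in :: "(nat \<times> nat) set \<Rightarrow> nat \<times> nat \<Rightarrow> nat \<times> nat \<Rightarrow> bool" where
  "path_in P \<equiv> (\<lambda>a b. a \<in> P \<and> b \<in> P \<and> adjacent a b)\<^sup>*\<^sup>*"

lemma path_in_mono: "path_in P x y \<Longrightarrow> P \<subseteq> P' \<Longrightarrow> path_in P' x y"
  by (induction rule: rtranclp_induct) (auto intro: rtranclp.rtrancl_into_rtrancl)

lemma is_piece_Un:
  assumes P: "is_piece P" and A: "is_piece A" and "a \<in> P" "b \<in> A" "adjacent a b"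
  shows "is_piece (P \<union> A)"
  unfolding is_piece_def
proof (intro conjI ballI)
  have inside: "path_in (P \<union> A) u v" if "u \<in> P \<and> v \<in> P \<or> u \<in> A \<and> v \<in> A" for u v
    using P A that path_in_mono[of P u v] path_in_mono[of A u v] unfolding is_piece_def by blast
  have "path_in (P \<union> A) a b" "path_in (P \<union> A) b a"
    using assms(3-5) by (auto intro!: r_into_rtranclp adjacent_sym)
  fix u v
  assume "u \<in> P \<union> A" "v \<in> P \<union> A"
  then show "path_in (P \<union> A) u v"
    using inside[of u a] inside[of b v] inside[of u b] inside[of a v] inside[of u v]
      \<open>path_in (P \<union> A) a b\<close> \<open>path_in (P \<union> A) b a\<close> assms(3,4)
    by (blast intro: rtranclp_trans)
qed (use P in \<open>simp add: is_piece_def\<close>)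

lemma is_piece_subset_column:
  assumes "A \<subseteq> column m" "A \<noteq> {}"
  shows "is_piece A"
  unfolding is_piece_def
proof (intro conjI ballI)
  fix x y
  assume "x \<in> A" "y \<in> A"
  moreover have "x = (0, m) \<or> x = (1, m)" "y = (0, m) \<or> y = (1, m)"
    using calculation assms(1) by (auto simp: column_def)
  then have "x = y \<or> adjacent x y"
    by (auto simp: adjacent_def)
  ultimately show "path_in A x y"
    by (cases "x = y") (auto intro: r_into_rtranclp)
qed (use assms(2) in simp)

text \<open>A path inside \<open>P\<close> that makes a detour through the last column enters and leaves it
  at squares \<open>(i, n)\<close>, which are equal or adjacent; so the detour can be cut short in column \<open>n\<close>.\<close>
lemma path_in_Diff_column:
  assumes "path_in P x y" "P \<subseteq> board (Suc (Suc n))" "x \<in> P - column (Suc n)"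
  shows "(y \<notin> column (Suc n) \<longrightarrow> path_in (P - column (Suc n)) x y) \<and>
    (y \<in> column (Suc n) \<longrightarrow> (\<exists>z\<in>{(0, n), (1, n)} \<inter> P. path_in (P - column (Suc n)) x z))"
  using assms(1)
proof (induction rule: rtranclp_induct)
  case base
  then show ?case
    using assms(3) by simp
next
  case (step y y')
  let ?C = "column (Suc n)" and ?P = "P - column (Suc n)"
  have close: "path_in ?P z z'" if "z \<in> {(0, n), (1, n)} \<inter> P" "z' \<in> {(0, n), (1, n)} \<inter> P" for z z'
    using that by (cases "z = z'") (auto intro!: r_into_rtranclp simp: adjacent_def column_def)
  have "y \<in> board (Suc (Suc n))" "y' \<in> board (Suc (Suc n))"
    using step.hyps(2) assms(2) by auto
  then consider (outside) "y \<notin> ?C" "y' \<notin> ?C" | (enter) i where "y = (i, n)" "y' \<in> ?C"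
    | (inside) "y \<in> ?C" "y' \<in> ?C" | (leave) i where "y \<in> ?C" "y' = (i, n)" "y' \<notin> ?C"
    using adjacent_into_column adjacent_sym step.hyps(2) by metis
  then show ?case
  proof cases
    case outside
    then show ?thesis
      using step by (auto intro: rtranclp.rtrancl_into_rtrancl)
  next
    case (enter i)
    then show ?thesis
      using step \<open>y \<in> board (Suc (Suc n))\<close> by (auto simp: board_def column_def)
  next
    case inside
    then show ?thesis
      using step by auto
  next
    case (leave i)
    then have "y' \<in> {(0, n), (1, n)} \<inter> P"
      using step.hyps(2) \<open>y' \<in> board (Suc (Suc n))\<close> by (auto simp: board_def)
    then show ?thesis
      using step leave close by (auto intro: rtranclp_trans)
  qed
qed

lemma is_piece_Diff_column:
  assumes P: "is_piece P" "P \<subseteq> board (Suc (Suc n))" and ne: "P - column (Suc n) \<noteq> {}"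
  shows "is_piece (P - column (Suc n))"
  unfolding is_piece_def
proof (intro conjI ballI)
  fix x y
  assume x: "x \<in> P - column (Suc n)" and y: "y \<in> P - column (Suc n)"
  then have "path_in P x y"
    using P(1) unfolding is_piece_def by blast
  from path_in_Diff_column[OF this P(2) x] y show "path_in (P - column (Suc n)) x y"
    by blast
qed (use ne in simp)

lemma is_piece_leaves_column:
  assumes P: "is_piece P" "P \<subseteq> board (Suc (Suc n))"
    and x: "x \<in> P \<inter> column (Suc n)" and y: "y \<in> P - column (Suc n)"
  shows "\<exists>i. (i, n) \<in> P \<and> (i, Suc n) \<in> P"
proof -
  have "y \<in> column (Suc n) \<or> (\<exists>i. (i, n) \<in> P \<and> (i, Suc n) \<in> P)" if "path_in P x y" for y
    using that
  proof (induction rule: rtranclp_induct)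
    case (step y y')
    then show ?case
      using adjacent_into_column[of y' n y] P(2) adjacent_sym by blast
  qed (use x in simp)
  moreover have "path_in P x y"
    using P(1) x y unfolding is_piece_def by blast
  ultimately show ?thesis
    using y by blast
qed

lemma partition_on_part_eq:
  "partition_on A Q \<Longrightarrow> P \<in> Q \<Longrightarrow> P' \<in> Q \<Longrightarrow> x \<in> P \<Longrightarrow> x \<in> P' \<Longrightarrow> P = P'"
  unfolding partition_on_def disjoint_def by blast

lemma partition_on_part_subset: "partition_on A Q \<Longrightarrow> P \<in> Q \<Longrightarrow> P \<subseteq> A"
  unfolding partition_on_def by blast

lemma partition_on_covers: "partition_on A Q \<Longrightarrow> x \<in> A \<Longrightarrow> \<exists>P\<in>Q. x \<in> P"
  unfolding partition_on_def by blast

lemma finite_divisions: "finite (divisions k m)"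
  using finitely_many_partition_on[OF finite_board] by (rule rev_finite_subset) (auto simp: divisions_def)

lemma finite_division: "Q \<in> divisions k m \<Longrightarrow> finite Q"
  using finite_elements[OF finite_board] by (auto simp: divisions_def)

text \<open>\<open>extend_division n X Y N R\<close> turns a division \<open>R\<close> of the \<open>2 \<times> (n + 1)\<close> board into one of the
  \<open>2 \<times> (n + 2)\<close> board: \<open>N\<close> are the new pieces inside the new column, while \<open>X\<close> and \<open>Y\<close> are
  glued to the pieces containing \<open>(0, n)\<close> and \<open>(1, n)\<close> respectively.\<close>
definition attach :: "nat \<Rightarrow> (nat \<times> nat) set \<Rightarrow> (nat \<times> nat) set \<Rightarrow> (nat \<times> nat) set \<Rightarrow> (nat \<times> nat) set"
  where "attach n X Y P = (if (0, n) \<in> P then X else {}) \<union> (if (1, n) \<in> P then Y else {})"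

definition extend_division :: "nat \<Rightarrow> (nat \<times> nat) set \<Rightarrow> (nat \<times> nat) set \<Rightarrow> (nat \<times> nat) set set \<Rightarrow>
    (nat \<times> nat) set set \<Rightarrow> (nat \<times> nat) set set"
  where "extend_division n X Y N R = N \<union> (\<lambda>P. P \<union> attach n X Y P) ` R"

definition restrict_division :: "nat \<Rightarrow> (nat \<times> nat) set set \<Rightarrow> (nat \<times> nat) set set" where
  "restrict_division n Q = (\<lambda>P. P - column (Suc n)) ` Q - {{}}"

text \<open>The glued parts \<open>X\<close> and \<open>Y\<close> contain the square next to the piece they are glued to, so
  gluing preserves connectedness.\<close>
definition extension_data :: "nat \<Rightarrow> (nat \<times> nat) set \<Rightarrow> (nat \<times> nat) set \<Rightarrow> (nat \<times> nat) set set \<Rightarrow> bool"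
  where "extension_data n X Y N \<longleftrightarrow>
    X \<in> {{}, {(0, Suc n)}, column (Suc n)} \<and> Y \<in> {{}, {(1, Suc n)}, column (Suc n)} \<and>
    N \<subseteq> {{(0, Suc n)}, {(1, Suc n)}, column (Suc n)} \<and>
    X \<inter> Y = {} \<and> disjoint N \<and> (X \<union> Y) \<inter> \<Union>N = {} \<and> X \<union> Y \<union> \<Union>N = column (Suc n)"

lemma extension_dataD:
  assumes "extension_data n X Y N"
  shows "X \<subseteq> column (Suc n)" "Y \<subseteq> column (Suc n)" "\<And>Z. Z \<in> N \<Longrightarrow> Z \<subseteq> column (Suc n)"
    "{} \<notin> N" "finite N" "disjoint N" "X \<inter> Y = {}" "(X \<union> Y) \<inter> \<Union>N = {}"
    "X \<union> Y \<union> \<Union>N = column (Suc n)"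
    "X \<noteq> {} \<Longrightarrow> (0, Suc n) \<in> X" "Y \<noteq> {} \<Longrightarrow> (1, Suc n) \<in> Y"
    "X \<noteq> column (Suc n) \<Longrightarrow> X \<subseteq> {(0, Suc n)}" "Y \<noteq> column (Suc n) \<Longrightarrow> Y \<subseteq> {(1, Suc n)}"
  using assms finite_subset[of N "{{(0, Suc n)}, {(1, Suc n)}, column (Suc n)}"]
  by (auto simp: extension_data_def column_def)

lemma attach_subset_column:
  "X \<subseteq> column (Suc n) \<Longrightarrow> Y \<subseteq> column (Suc n) \<Longrightarrow> attach n X Y P \<subseteq> column (Suc n)"
  by (auto simp: attach_def)

lemma attach_subset_Un: "attach n X Y P \<subseteq> X \<union> Y"
  by (simp add: attach_def)

lemma attach_disjoint:
  assumes "partition_on A R" "P \<in> R" "P' \<in> R" "P \<noteq> P'" "X \<inter> Y = {}"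
  shows "attach n X Y P \<inter> attach n X Y P' = {}"
  using partition_on_part_eq[OF assms(1-3)] assms(4,5) by (auto simp: attach_def)

lemma Un_attach_Diff_column:
  "P \<subseteq> board (Suc n) \<Longrightarrow> X \<subseteq> column (Suc n) \<Longrightarrow> Y \<subseteq> column (Suc n) \<Longrightarrow>
    (P \<union> attach n X Y P) - column (Suc n) = P"
  using board_Int_column[of "Suc n"] by (auto simp: attach_def)

lemma extend_column_subset_iff:
  assumes "partition_on (board (Suc n)) R" "Z \<subseteq> column (Suc n)"
  shows "Z \<in> extend_division n X Y N R \<longleftrightarrow> Z \<in> N"
proof -
  have "Z \<noteq> P \<union> attach n X Y P" if "P \<in> R" for P
  proof
    assume "Z = P \<union> attach n X Y P"
    then have "P \<subseteq> board (Suc n) \<inter> column (Suc n)"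
      using partition_on_part_subset[OF assms(1) that] assms(2) by blast
    then show False
      using partition_onD3[OF assms(1)] that board_Int_column[of "Suc n"] by auto
  qed
  then show ?thesis
    unfolding extend_division_def by blast
qed

lemma restrict_extend_division:
  assumes R: "partition_on (board (Suc n)) R" and XYN: "extension_data n X Y N"
  shows "restrict_division n (extend_division n X Y N R) = R"
proof -
  have "(\<lambda>P. P - column (Suc n)) ` (\<lambda>P. P \<union> attach n X Y P) ` R = R"
    using Un_attach_Diff_column[OF partition_on_part_subset[OF R] extension_dataD(1,2)[OF XYN]]
    by (simp add: image_image)
  moreover have "(\<lambda>P. P - column (Suc n)) ` N \<subseteq> {{}}"
    using extension_dataD(3)[OF XYN] by auto
  ultimately show ?thesis
    using partition_onD3[OF R] unfolding restrict_division_def extend_division_def image_Un by blast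
qed

lemma inj_on_extend:
  "extension_data n X Y N \<Longrightarrow> inj_on (extend_division n X Y N) {R. partition_on (board (Suc n)) R}"
  by (rule inj_on_inverseI[where g = "restrict_division n"]) (simp add: restrict_extend_division)

lemma card_extend_image:
  "extension_data n X Y N \<Longrightarrow> S \<subseteq> divisions j (Suc n) \<Longrightarrow> card (extend_division n X Y N ` S) = card S"
  by (rule card_image, rule inj_on_subset[OF inj_on_extend]) (auto simp: divisions_def)

lemma extend_images_disjoint:
  assumes "Z \<subseteq> column (Suc n)" "Z \<in> N" "Z \<notin> N'"
    and "S \<subseteq> divisions j (Suc n)" "S' \<subseteq> divisions j' (Suc n)"
  shows "extend_division n X Y N ` S \<inter> extend_division n X' Y' N' ` S' = {}"
  using extend_column_subset_iff[OF _ assms(1)] assms(2-5) unfolding divisions_def by blast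

lemma card_extend:
  assumes R: "partition_on (board (Suc n)) R" "finite R" and XYN: "extension_data n X Y N"
  shows "card (extend_division n X Y N R) = card N + card R"
proof -
  have "inj_on (\<lambda>P. P \<union> attach n X Y P) R"
    by (rule inj_on_inverseI[where g = "\<lambda>P. P - column (Suc n)"])
      (use Un_attach_Diff_column[OF partition_on_part_subset[OF R(1)] extension_dataD(1,2)[OF XYN]] in blast)
  moreover have "N \<inter> (\<lambda>P. P \<union> attach n X Y P) ` R = {}"
    using extend_column_subset_iff[OF R(1)] extension_dataD(3)[OF XYN] unfolding extend_division_def by blast
  ultimately show ?thesis
    unfolding extend_division_def using R(2) extension_dataD(5)[OF XYN] by (simp add: card_Un_disjoint card_image)
qed

lemma Union_extend_division:
  assumes R: "partition_on (board (Suc n)) R" and XYN: "extension_data n X Y N"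
  shows "\<Union>(extend_division n X Y N R) = board (Suc (Suc n))"
proof -
  have "(0, n) \<in> board (Suc n)" "(1, n) \<in> board (Suc n)"
    by (simp_all add: board_def)
  then obtain P\<^sub>0 P\<^sub>1 where P: "P\<^sub>0 \<in> R" "(0, n) \<in> P\<^sub>0" "P\<^sub>1 \<in> R" "(1, n) \<in> P\<^sub>1"
    using partition_on_covers[OF R] by metis
  then have "X \<subseteq> attach n X Y P\<^sub>0" "Y \<subseteq> attach n X Y P\<^sub>1"
    by (simp_all add: attach_def)
  then have "X \<union> Y \<subseteq> \<Union>(attach n X Y ` R)"
    using P(1,3) by blast
  moreover have "\<Union>(attach n X Y ` R) \<subseteq> X \<union> Y"
    by (rule UN_least) (rule attach_subset_Un)
  ultimately have attached: "\<Union>(attach n X Y ` R) = X \<union> Y"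
    by (rule antisym[rotated])
  have "\<Union>(extend_division n X Y N R) = \<Union>N \<union> \<Union>R \<union> \<Union>(attach n X Y ` R)"
    unfolding extend_division_def by auto
  also have "\<dots> = board (Suc n) \<union> (X \<union> Y \<union> \<Union>N)"
    unfolding attached partition_onD1[OF R, symmetric] by auto
  finally show ?thesis
    unfolding extension_dataD(9)[OF XYN] board_Suc[of "Suc n"] .
qed

lemma disjoint_extend_division:
  assumes R: "partition_on (board (Suc n)) R" and XYN: "extension_data n X Y N"
  shows "disjoint (extend_division n X Y N R)"
proof (rule disjointI)
  note XY = extension_dataD(1,2,7,8)[OF XYN]
  have old_part: "P \<inter> column (Suc n) = {}" if "P \<in> R" for P
    using partition_on_part_subset[OF R that] board_Int_column[of "Suc n"] by blast
  have old_new_disjoint: "(P \<union> attach n X Y P) \<inter> Z = {}" if "P \<in> R" "Z \<in> N" for P Z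
    using old_part[OF that(1)] extension_dataD(3)[OF XYN that(2)] attach_subset_Un[of n X Y P] XY(4) that(2)
    by blast
  have old_old_disjoint: "(P \<union> attach n X Y P) \<inter> (P' \<union> attach n X Y P') = {}"
    if "P \<in> R" "P' \<in> R" "P \<noteq> P'" for P P'
  proof -
    have "P \<inter> P' = {}"
      using partition_onD2[OF R] that unfolding disjoint_def by blast
    then show ?thesis
      using attach_disjoint[OF R that XY(3)] old_part[OF that(1)] old_part[OF that(2)]
        attach_subset_column[OF XY(1,2)] by blast
  qed
  fix Z Z'
  assume Z: "Z \<in> extend_division n X Y N R" "Z' \<in> extend_division n X Y N R" "Z \<noteq> Z'"
  then consider (both_new) "Z \<in> N" "Z' \<in> N"
    | (new_old) P' where "Z \<in> N" "P' \<in> R" "Z' = P' \<union> attach n X Y P'"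
    | (old_new) P where "P \<in> R" "Z = P \<union> attach n X Y P" "Z' \<in> N"
    | (both_old) P P' where "P \<in> R" "Z = P \<union> attach n X Y P" "P' \<in> R" "Z' = P' \<union> attach n X Y P'"
    unfolding extend_division_def by blast
  then show "Z \<inter> Z' = {}"
  proof cases
    case both_new
    then show ?thesis
      using extension_dataD(6)[OF XYN] Z(3) unfolding disjoint_def by blast
  next
    case new_old
    then show ?thesis
      using old_new_disjoint[of P' Z] by blast
  next
    case old_new
    then show ?thesis
      using old_new_disjoint[of P Z'] by blast
  next
    case both_old
    then show ?thesis
      using old_old_disjoint[of P P'] Z(3) by blast
  qed
qed

lemma partition_on_extend:
  assumes R: "partition_on (board (Suc n)) R" and XYN: "extension_data n X Y N"
  shows "partition_on (board (Suc (Suc n))) (extend_division n X Y N R)"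
proof -
  have "P \<union> attach n X Y P \<noteq> {}" if "P \<in> R" for P
    using partition_onD3[OF R] that by auto
  then have "{} \<notin> extend_division n X Y N R"
    using extension_dataD(4)[OF XYN] unfolding extend_division_def by auto
  then show ?thesis
    unfolding partition_on_def
    using Union_extend_division[OF R XYN] disjoint_extend_division[OF R XYN] by blast
qed

lemma is_piece_extend:
  assumes R: "\<forall>P\<in>R. is_piece P" and XYN: "extension_data n X Y N"
  shows "\<forall>Z\<in>extend_division n X Y N R. is_piece Z"
proof
  fix Z
  assume "Z \<in> extend_division n X Y N R"
  then consider "Z \<in> N" | P where "P \<in> R" "Z = P \<union> attach n X Y P"
    unfolding extend_division_def by blast
  then show "is_piece Z"
  proof cases
    case 1
    then show ?thesis
      using is_piece_subset_column extension_dataD(3,4)[OF XYN] by blast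
  next
    case 2
    note attach_column = attach_subset_column[OF extension_dataD(1,2)[OF XYN]]
    show ?thesis
    proof (cases "attach n X Y P = {}")
      case False
      then obtain i where "(i, n) \<in> P" "(i, Suc n) \<in> attach n X Y P"
        using extension_dataD(10,11)[OF XYN] unfolding attach_def by (auto split: if_splits)
      moreover have "adjacent (i, n) (i, Suc n)"
        by (simp add: adjacent_def)
      ultimately show ?thesis
        using is_piece_Un R 2 is_piece_subset_column[OF attach_column False] by blast
    qed (use R 2 in simp)
  qed
qed

lemma extend_in_divisions:
  assumes R: "R \<in> divisions j (Suc n)" and XYN: "extension_data n X Y N"
  shows "extend_division n X Y N R \<in> divisions (card N + j) (Suc (Suc n))"
  using partition_on_extend[OF _ XYN] is_piece_extend[OF _ XYN] card_extend[OF _ _ XYN]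
    finite_division[OF R] R unfolding divisions_def by auto

lemma restrict_division_eq_image:
  "restrict_division n Q = (\<lambda>P. P - column (Suc n)) ` {P \<in> Q. \<not> P \<subseteq> column (Suc n)}"
  unfolding restrict_division_def by blast

lemma partition_on_restrict_division:
  assumes "partition_on (board (Suc (Suc n))) Q"
  shows "partition_on (board (Suc n)) (restrict_division n Q)"
proof -
  have "restrict_division n Q = (\<inter>) (- column (Suc n)) ` Q - {{}}"
    unfolding restrict_division_def by (simp add: Diff_eq Int_commute)
  moreover have "- column (Suc n) \<inter> board (Suc (Suc n)) = board (Suc n)"
    using board_Suc[of "Suc n"] board_Int_column[of "Suc n"] by blast
  ultimately show ?thesis
    using partition_on_restrict[OF assms, of "- column (Suc n)"] by simp
qed

lemma card_restrict_division:
  assumes Q: "partition_on (board (Suc (Suc n))) Q" "finite Q"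
  shows "card Q = card {P \<in> Q. P \<subseteq> column (Suc n)} + card (restrict_division n Q)"
proof -
  let ?C = "column (Suc n)"
  have "inj_on (\<lambda>P. P - ?C) {P \<in> Q. \<not> P \<subseteq> ?C}"
  proof (rule inj_onI)
    fix P P'
    assume P: "P \<in> {P \<in> Q. \<not> P \<subseteq> ?C}" "P' \<in> {P \<in> Q. \<not> P \<subseteq> ?C}" "P - ?C = P' - ?C"
    then obtain x where "x \<in> P" "x \<in> P'"
      by blast
    then show "P = P'"
      using partition_on_part_eq[OF Q(1)] P by blast
  qed
  then have "card (restrict_division n Q) = card {P \<in> Q. \<not> P \<subseteq> ?C}"
    unfolding restrict_division_eq_image by (rule card_image)
  moreover have "card Q = card ({P \<in> Q. P \<subseteq> ?C} \<union> {P \<in> Q. \<not> P \<subseteq> ?C})"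
    by (rule arg_cong[where f = card]) blast
  moreover have "\<dots> = card {P \<in> Q. P \<subseteq> ?C} + card {P \<in> Q. \<not> P \<subseteq> ?C}"
    using Q(2) by (intro card_Un_disjoint) auto
  ultimately show ?thesis
    by simp
qed

lemma restrict_in_divisions:
  assumes Q: "Q \<in> divisions k (Suc (Suc n))"
  shows "restrict_division n Q \<in> divisions (k - card {P \<in> Q. P \<subseteq> column (Suc n)}) (Suc n)"
proof -
  have p: "partition_on (board (Suc (Suc n))) Q" and "\<forall>P\<in>Q. is_piece P" "card Q = k"
    using Q unfolding divisions_def by auto
  then have "\<forall>P\<in>restrict_division n Q. is_piece P"
    using is_piece_Diff_column partition_on_part_subset[OF p] unfolding restrict_division_def by blast
  then show ?thesis
    using partition_on_restrict_division[OF p] card_restrict_division[OF p finite_division[OF Q]] \<open>card Q = k\<close>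
    unfolding divisions_def by auto
qed

lemma extend_restrict_division:
  assumes attached: "\<forall>P\<in>Q. \<not> P \<subseteq> column (Suc n) \<longrightarrow> P \<inter> column (Suc n) = attach n X Y P"
  shows "extend_division n X Y {P \<in> Q. P \<subseteq> column (Suc n)} (restrict_division n Q) = Q"
proof -
  let ?C = "column (Suc n)"
  have restore: "P - ?C \<union> attach n X Y (P - ?C) = P" if "P \<in> Q" "\<not> P \<subseteq> ?C" for P
  proof -
    have "attach n X Y (P - ?C) = attach n X Y P"
      by (simp add: attach_def column_def)
    then show ?thesis
      using attached that by blast
  qed
  have "(\<lambda>P. P \<union> attach n X Y P) ` restrict_division n Q = (\<lambda>P. P) ` {P \<in> Q. \<not> P \<subseteq> ?C}"
    unfolding restrict_division_eq_image image_image using restore by (intro image_cong) auto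
  then show ?thesis
    unfolding extend_division_def by blast
qed

lemma extend_restrict_image:
  assumes Q: "Q \<in> divisions k (Suc (Suc n))"
    and attached: "\<forall>P\<in>Q. \<not> P \<subseteq> column (Suc n) \<longrightarrow> P \<inter> column (Suc n) = attach n X Y P"
    and N: "{P \<in> Q. P \<subseteq> column (Suc n)} = N"
    and S: "restrict_division n Q \<in> divisions (k - card N) (Suc n) \<Longrightarrow> restrict_division n Q \<in> S"
  shows "Q \<in> extend_division n X Y N ` S"
  using extend_restrict_division[OF attached] restrict_in_divisions[OF Q] S unfolding N by force

lemma division_piece_leaves_column:
  assumes "Q \<in> divisions k (Suc (Suc n))" "P \<in> Q" "P \<inter> column (Suc n) \<noteq> {}" "\<not> P \<subseteq> column (Suc n)"
  shows "\<exists>i\<le>1. (i, n) \<in> P \<and> (i, Suc n) \<in> P"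
proof -
  have "is_piece P" "P \<subseteq> board (Suc (Suc n))"
    using assms(1,2) partition_on_part_subset unfolding divisions_def by auto
  then obtain i where "(i, n) \<in> P" "(i, Suc n) \<in> P"
    using is_piece_leaves_column assms(3,4) by blast
  moreover have "i \<le> 1"
    using \<open>(i, n) \<in> P\<close> \<open>P \<subseteq> board (Suc (Suc n))\<close> by (auto simp: board_def)
  ultimately show ?thesis
    by blast
qed

definition joined :: "(nat \<times> nat) set set \<Rightarrow> nat \<Rightarrow> bool" where
  "joined Q m \<longleftrightarrow> (\<exists>P\<in>Q. (0, m) \<in> P \<and> (1, m) \<in> P)"

definition joined_divisions :: "nat \<Rightarrow> nat \<Rightarrow> (nat \<times> nat) set set set" where
  "joined_divisions k m = {Q \<in> divisions k m. joined Q (m - 1)}"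

definition split_divisions :: "nat \<Rightarrow> nat \<Rightarrow> (nat \<times> nat) set set set" where
  "split_divisions k m = {Q \<in> divisions k m. \<not> joined Q (m - 1)}"

lemma s_eq_card_split_divisions: "s k m = card (split_divisions k m)"
  by (simp add: s_def split_divisions_def joined_def)

lemma d_eq_card_joined_divisions_plus_s: "d k m = card (joined_divisions k m) + s k m"
proof -
  have "divisions k m = joined_divisions k m \<union> split_divisions k m"
    "joined_divisions k m \<inter> split_divisions k m = {}"
    by (auto simp: joined_divisions_def split_divisions_def)
  moreover have "finite (joined_divisions k m)" "finite (split_divisions k m)"
    using finite_divisions[of k m] by (auto simp: joined_divisions_def split_divisions_def)
  ultimately show ?thesis
    unfolding d_def s_eq_card_split_divisions by (simp add: card_Un_disjoint)
qed

lemma joined_restrict_division_iff: "joined (restrict_division n Q) n \<longleftrightarrow> joined Q n"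
proof -
  have "(0, n) \<notin> column (Suc n)" "(1, n) \<notin> column (Suc n)"
    by (simp_all add: column_def)
  then show ?thesis
    unfolding joined_def restrict_division_def by blast
qed

lemma column_subset_attach_iff:
  assumes R: "partition_on (board (Suc n)) R" and XYN: "extension_data n X Y N"
  shows "(\<exists>P\<in>R. column (Suc n) \<subseteq> attach n X Y P) \<longleftrightarrow>
    X = column (Suc n) \<or> Y = column (Suc n) \<or> (X \<union> Y = column (Suc n) \<and> joined R n)"
    (is "?lhs \<longleftrightarrow> ?rhs")
proof
  let ?C = "column (Suc n)"
  assume ?lhs
  then obtain P where P: "P \<in> R" "(0, Suc n) \<in> attach n X Y P" "(1, Suc n) \<in> attach n X Y P"
    by (auto simp: column_def)
  show ?rhs
  proof (rule ccontr)
    assume "\<not> ?rhs"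
    then have "X \<subseteq> {(0, Suc n)}" "Y \<subseteq> {(1, Suc n)}"
      using extension_dataD(12,13)[OF XYN] by blast+
    then have "(0, n) \<in> P" "(0, Suc n) \<in> X" "(1, n) \<in> P" "(1, Suc n) \<in> Y"
      using P(2,3) by (auto simp: attach_def split: if_splits)
    then have "X \<union> Y = ?C" "joined R n"
      using \<open>X \<subseteq> {(0, Suc n)}\<close> \<open>Y \<subseteq> {(1, Suc n)}\<close> P(1)
      by (auto simp: column_def joined_def)
    then show False
      using \<open>\<not> ?rhs\<close> by blast
  qed
next
  assume ?rhs
  have "(0, n) \<in> board (Suc n)" "(1, n) \<in> board (Suc n)"
    by (simp_all add: board_def)
  then obtain P\<^sub>0 P\<^sub>1 where "P\<^sub>0 \<in> R" "(0, n) \<in> P\<^sub>0" "P\<^sub>1 \<in> R" "(1, n) \<in> P\<^sub>1"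
    using partition_on_covers[OF R] by metis
  then have "X \<subseteq> attach n X Y P\<^sub>0" "Y \<subseteq> attach n X Y P\<^sub>1"
    by (simp_all add: attach_def)
  moreover have "joined R n \<Longrightarrow> \<exists>P\<in>R. X \<union> Y \<subseteq> attach n X Y P"
    unfolding joined_def attach_def by auto
  ultimately show ?lhs
    using \<open>?rhs\<close> \<open>P\<^sub>0 \<in> R\<close> \<open>P\<^sub>1 \<in> R\<close> by blast
qed

lemma joined_extend_iff:
  assumes R: "partition_on (board (Suc n)) R" and XYN: "extension_data n X Y N"
  shows "joined (extend_division n X Y N R) (Suc n) \<longleftrightarrow>
    column (Suc n) \<in> N \<or> X = column (Suc n) \<or> Y = column (Suc n) \<or>
    (X \<union> Y = column (Suc n) \<and> joined R n)"
proof -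
  let ?C = "column (Suc n)"
  have "(\<exists>Z\<in>N. ?C \<subseteq> Z) \<longleftrightarrow> ?C \<in> N"
    using extension_dataD(3)[OF XYN] subset_antisym by blast
  moreover have "P \<inter> ?C = {}" if "P \<in> R" for P
    using partition_on_part_subset[OF R that] board_Int_column[of "Suc n"] by blast
  then have "(\<exists>P\<in>R. ?C \<subseteq> P \<union> attach n X Y P) \<longleftrightarrow> (\<exists>P\<in>R. ?C \<subseteq> attach n X Y P)"
    by blast
  moreover have "joined (extend_division n X Y N R) (Suc n) \<longleftrightarrow>
      (\<exists>Z\<in>N. ?C \<subseteq> Z) \<or> (\<exists>P\<in>R. ?C \<subseteq> P \<union> attach n X Y P)"
    by (simp add: joined_def column_def extend_division_def bex_Un)
  ultimately show ?thesis
    using column_subset_attach_iff[OF R XYN] by blast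
qed

lemma extend_image_subset_joined_divisions:
  assumes S: "S \<subseteq> divisions j (Suc n)" and XYN: "extension_data n X Y N" and k: "card N + j = k"
    and joins: "column (Suc n) \<in> N \<or> X = column (Suc n) \<or> Y = column (Suc n)"
  shows "extend_division n X Y N ` S \<subseteq> joined_divisions k (Suc (Suc n))"
proof
  fix Q
  assume "Q \<in> extend_division n X Y N ` S"
  then obtain R where R: "R \<in> divisions j (Suc n)" and Q: "Q = extend_division n X Y N R"
    using S by blast
  have "joined Q (Suc n)"
    using joined_extend_iff[of n R X Y N] R XYN joins unfolding Q divisions_def by blast
  then show "Q \<in> joined_divisions k (Suc (Suc n))"
    using extend_in_divisions[OF R XYN] k unfolding Q joined_divisions_def by simp
qed

lemma extend_image_subset_split_divisions:
  assumes S: "S \<subseteq> divisions j (Suc n)" and XYN: "extension_data n X Y N" and k: "card N + j = k"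
    and "column (Suc n) \<notin> N" "X \<noteq> column (Suc n)" "Y \<noteq> column (Suc n)"
    and "\<And>R. R \<in> S \<Longrightarrow> X \<union> Y = column (Suc n) \<Longrightarrow> \<not> joined R n"
  shows "extend_division n X Y N ` S \<subseteq> split_divisions k (Suc (Suc n))"
proof
  fix Q
  assume "Q \<in> extend_division n X Y N ` S"
  then obtain R where "R \<in> S" and R: "R \<in> divisions j (Suc n)" and Q: "Q = extend_division n X Y N R"
    using S by blast
  have "\<not> joined Q (Suc n)"
    using joined_extend_iff[of n R X Y N] R XYN assms(4-7) \<open>R \<in> S\<close> unfolding Q divisions_def by blast
  then show "Q \<in> split_divisions k (Suc (Suc n))"
    using extend_in_divisions[OF R XYN] k unfolding Q split_divisions_def by simp
qed

lemma piece_containing_column: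
  assumes p: "partition_on (board (Suc (Suc n))) Q" and P: "P \<in> Q" "column (Suc n) \<subseteq> P"
  shows "P' \<in> Q \<Longrightarrow> P' \<noteq> P \<Longrightarrow> P' \<inter> column (Suc n) = {}"
    and "P = column (Suc n) \<Longrightarrow> {P' \<in> Q. P' \<subseteq> column (Suc n)} = {column (Suc n)}"
    and "P \<noteq> column (Suc n) \<Longrightarrow> {P' \<in> Q. P' \<subseteq> column (Suc n)} = {}"
    and "(P \<noteq> column (Suc n) \<Longrightarrow> attach n X Y P = column (Suc n)) \<Longrightarrow>
      (\<And>P'. P' \<in> Q \<Longrightarrow> P' \<noteq> P \<Longrightarrow> attach n X Y P' = {}) \<Longrightarrow>
      \<forall>P'\<in>Q. \<not> P' \<subseteq> column (Suc n) \<longrightarrow> P' \<inter> column (Suc n) = attach n X Y P'"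
proof -
  let ?C = "column (Suc n)"
  have others: "P' \<inter> ?C = {}" if "P' \<in> Q" "P' \<noteq> P" for P'
  proof -
    have False if "x \<in> P'" "x \<in> ?C" for x
      using partition_on_part_eq[OF p \<open>P' \<in> Q\<close> P(1) that(1)] that(2) P(2) \<open>P' \<noteq> P\<close> by blast
    then show ?thesis
      by blast
  qed
  then show "P' \<in> Q \<Longrightarrow> P' \<noteq> P \<Longrightarrow> P' \<inter> ?C = {}" .
  have only_P: "P' = P" if "P' \<in> Q" "P' \<subseteq> ?C" for P'
  proof (rule ccontr)
    assume "P' \<noteq> P"
    then have "P' = {}"
      using others[OF that(1)] that(2) by blast
    then show False
      using partition_onD3[OF p] that(1) by simp
  qed
  show "P = ?C \<Longrightarrow> {P' \<in> Q. P' \<subseteq> ?C} = {?C}"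
    using only_P P(1) by blast
  show "P \<noteq> ?C \<Longrightarrow> {P' \<in> Q. P' \<subseteq> ?C} = {}"
    using only_P P(2) by blast
  assume attached: "P \<noteq> ?C \<Longrightarrow> attach n X Y P = ?C"
    "\<And>P'. P' \<in> Q \<Longrightarrow> P' \<noteq> P \<Longrightarrow> attach n X Y P' = {}"
  show "\<forall>P'\<in>Q. \<not> P' \<subseteq> ?C \<longrightarrow> P' \<inter> ?C = attach n X Y P'"
  proof (intro ballI impI)
    fix P'
    assume P': "P' \<in> Q" "\<not> P' \<subseteq> ?C"
    show "P' \<inter> ?C = attach n X Y P'"
    proof (cases "P' = P")
      case True
      then have "P \<noteq> ?C"
        using P'(2) by blast
      then show ?thesis
        using attached(1) P(2) True by (simp add: Int_absorb1)
    next
      case False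
      then show ?thesis
        using others[OF P'(1)] attached(2)[OF P'(1)] by simp
    qed
  qed
qed

lemma joined_divisions_Suc_Suc_subset:
  assumes Q: "Q \<in> joined_divisions k (Suc (Suc n))"
  shows "Q \<in> extend_division n {} {} {column (Suc n)} ` divisions (k - 1) (Suc n)
           \<union> extend_division n (column (Suc n)) {} {} ` divisions k (Suc n)
           \<union> extend_division n {} (column (Suc n)) {} ` split_divisions k (Suc n)"
proof -
  let ?C = "column (Suc n)"
  have Qd: "Q \<in> divisions k (Suc (Suc n))" and "joined Q (Suc n)"
    using Q by (simp_all add: joined_divisions_def)
  then have p: "partition_on (board (Suc (Suc n))) Q"
    by (simp add: divisions_def)
  obtain P where P: "P \<in> Q" "?C \<subseteq> P"
    using \<open>joined Q (Suc n)\<close> unfolding joined_def column_def by blast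
  have unique: "P' = P" if "P' \<in> Q" "x \<in> P'" "x \<in> P" for P' x
    using partition_on_part_eq[OF p that(1) P(1) that(2,3)] .
  note N_column = piece_containing_column(2)[OF p P] and N_row = piece_containing_column(3)[OF p P]
    and attached = piece_containing_column(4)[OF p P]
  show ?thesis
  proof (cases "P = ?C")
    case True
    have "Q \<in> extend_division n {} {} {?C} ` divisions (k - 1) (Suc n)"
    proof (rule extend_restrict_image[OF Qd attached])
      show "{P' \<in> Q. P' \<subseteq> ?C} = {?C}"
        using N_column True .
    qed (use True in \<open>simp_all add: attach_def\<close>)
    then show ?thesis
      by blast
  next
    case False
    then obtain i where "i \<le> 1" "(i, n) \<in> P"
      using division_piece_leaves_column[OF Qd P(1)] P(2) by (auto simp: column_def)
    then have "(0, n) \<in> P \<or> (1, n) \<in> P"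
      by (cases i) auto
    show ?thesis
    proof (cases "(0, n) \<in> P")
      case True
      have "Q \<in> extend_division n ?C {} {} ` divisions k (Suc n)"
      proof (rule extend_restrict_image[OF Qd attached])
        show "attach n ?C {} P' = {}" if "P' \<in> Q" "P' \<noteq> P" for P'
          using unique[OF that(1), of "(0, n)"] True that(2) by (auto simp: attach_def)
        show "{P' \<in> Q. P' \<subseteq> ?C} = {}"
          using N_row False .
      qed (use True in \<open>simp_all add: attach_def\<close>)
      then show ?thesis
        by blast
    next
      case row1: False
      with \<open>(0, n) \<in> P \<or> (1, n) \<in> P\<close> have "(1, n) \<in> P"
        by blast
      have "Q \<in> extend_division n {} ?C {} ` split_divisions k (Suc n)"
      proof (rule extend_restrict_image[OF Qd attached])
        show "attach n {} ?C P' = {}" if "P' \<in> Q" "P' \<noteq> P" for P'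
          using unique[OF that(1), of "(1, n)"] \<open>(1, n) \<in> P\<close> that(2) by (auto simp: attach_def)
        show "{P' \<in> Q. P' \<subseteq> ?C} = {}"
          using N_row False .
        have "\<not> joined Q n"
          using row1 unique[of _ "(1, n)"] \<open>(1, n) \<in> P\<close> unfolding joined_def by blast
        then show "restrict_division n Q \<in> split_divisions k (Suc n)"
          if "restrict_division n Q \<in> divisions (k - card {}) (Suc n)"
          using that by (simp add: split_divisions_def joined_restrict_division_iff)
      qed (use row1 \<open>(1, n) \<in> P\<close> in \<open>simp_all add: attach_def\<close>)
      then show ?thesis
        by blast
    qed
  qed
qed

lemma split_division_row_piece:
  assumes Q: "Q \<in> split_divisions k (Suc (Suc n))" and i: "i \<le> 1"
    and P: "P \<in> Q" "(i, Suc n) \<in> P" "{(i, Suc n)} \<notin> Q"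
  shows "(i, n) \<in> P"
proof -
  have Qd: "Q \<in> divisions k (Suc (Suc n))" and "\<not> joined Q (Suc n)"
    using Q by (simp_all add: split_divisions_def)
  then have "(1 - i, Suc n) \<notin> P"
    using P(1,2) i unfolding joined_def by (cases i) auto
  moreover have "column (Suc n) = {(i, Suc n), (1 - i, Suc n)}"
    using i by (cases i) (auto simp: column_def)
  ultimately have PC: "P \<inter> column (Suc n) = {(i, Suc n)}"
    using P(2) by auto
  have "\<not> P \<subseteq> column (Suc n)"
  proof
    assume "P \<subseteq> column (Suc n)"
    then have "P = {(i, Suc n)}"
      using PC by blast
    then show False
      using P(1,3) by simp
  qed
  moreover have "P \<inter> column (Suc n) \<noteq> {}"
    using PC by simp
  ultimately obtain j where "j \<le> 1" "(j, n) \<in> P" "(j, Suc n) \<in> P"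
    using division_piece_leaves_column[OF Qd P(1)] by blast
  moreover from this have "j = i"
    using PC mem_column[of j "Suc n"] by blast
  ultimately show ?thesis
    by simp
qed

lemma split_division_attached:
  assumes Q: "Q \<in> split_divisions k (Suc (Suc n))"
  defines "X \<equiv> if {(0, Suc n)} \<in> Q then {} else {(0, Suc n)}"
    and "Y \<equiv> if {(1, Suc n)} \<in> Q then {} else {(1, Suc n)}"
  shows "\<forall>P\<in>Q. \<not> P \<subseteq> column (Suc n) \<longrightarrow> P \<inter> column (Suc n) = attach n X Y P"
proof (intro ballI impI)
  let ?C = "column (Suc n)"
  have p: "partition_on (board (Suc (Suc n))) Q"
    using Q by (simp add: split_divisions_def divisions_def)
  fix P
  assume P: "P \<in> Q" "\<not> P \<subseteq> ?C"
  have mem: "(i, Suc n) \<in> P \<longleftrightarrow> (i, n) \<in> P \<and> {(i, Suc n)} \<notin> Q" if i: "i \<le> 1" for i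
  proof
    assume i_P: "(i, Suc n) \<in> P"
    have "{(i, Suc n)} \<notin> Q"
    proof
      assume "{(i, Suc n)} \<in> Q"
      then have "P = {(i, Suc n)}"
        using partition_on_part_eq[OF p P(1)] i_P by blast
      then show False
        using P(2) mem_column[OF i] by blast
    qed
    then show "(i, n) \<in> P \<and> {(i, Suc n)} \<notin> Q"
      using split_division_row_piece[OF Q i P(1) i_P] by blast
  next
    assume i_P: "(i, n) \<in> P \<and> {(i, Suc n)} \<notin> Q"
    have "(i, Suc n) \<in> board (Suc (Suc n))"
      using i by (cases i) (auto simp: board_def)
    then obtain P' where "P' \<in> Q" "(i, Suc n) \<in> P'"
      using partition_on_covers[OF p] by blast
    moreover from this have "(i, n) \<in> P'"
      using split_division_row_piece[OF Q i] i_P by blast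
    ultimately show "(i, Suc n) \<in> P"
      using partition_on_part_eq[OF p P(1)] i_P by blast
  qed
  have "attach n X Y P =
      (if (0, n) \<in> P \<and> {(0, Suc n)} \<notin> Q then {(0, Suc n)} else {}) \<union>
      (if (1, n) \<in> P \<and> {(1, Suc n)} \<notin> Q then {(1, Suc n)} else {})"
    by (simp add: attach_def X_def Y_def)
  also have "\<dots> = (if (0, Suc n) \<in> P then {(0, Suc n)} else {}) \<union> (if (1, Suc n) \<in> P then {(1, Suc n)} else {})"
    using mem[of 0] mem[of 1] by simp
  also have "\<dots> = P \<inter> ?C"
    by (auto simp: column_def)
  finally show "P \<inter> ?C = attach n X Y P"
    by (rule sym)
qed

lemma split_division_column_pieces:
  assumes Q: "Q \<in> split_divisions k (Suc (Suc n))"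
  shows "{P \<in> Q. P \<subseteq> column (Suc n)} = {Z \<in> {{(0, Suc n)}, {(1, Suc n)}}. Z \<in> Q}"
proof -
  have p: "partition_on (board (Suc (Suc n))) Q"
    using Q unfolding split_divisions_def divisions_def by auto
  have "P = {(0, Suc n)} \<or> P = {(1, Suc n)}" if "P \<in> Q" "P \<subseteq> column (Suc n)" for P
  proof -
    have "\<not> ((0, Suc n) \<in> P \<and> (1, Suc n) \<in> P)"
      using Q that(1) unfolding split_divisions_def joined_def by auto
    then have "P \<subseteq> {(0, Suc n)} \<or> P \<subseteq> {(1, Suc n)}"
      using that(2) by (cases "(0, Suc n) \<in> P") (auto simp: column_def)
    then show ?thesis
      using partition_onD3[OF p] that(1) by (auto simp: subset_singleton_iff)
  qed
  then show ?thesis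
    by (auto simp: column_def)
qed

lemma split_division_not_joined:
  assumes Q: "Q \<in> split_divisions k (Suc (Suc n))" and "{(0, Suc n)} \<notin> Q" "{(1, Suc n)} \<notin> Q"
  shows "\<not> joined Q n"
proof
  have p: "partition_on (board (Suc (Suc n))) Q"
    using Q unfolding split_divisions_def divisions_def by auto
  assume "joined Q n"
  then obtain P where P: "P \<in> Q" "(0, n) \<in> P" "(1, n) \<in> P"
    unfolding joined_def by blast
  have "(0, Suc n) \<in> board (Suc (Suc n))" "(1, Suc n) \<in> board (Suc (Suc n))"
    by (simp_all add: board_def)
  then obtain P\<^sub>0 P\<^sub>1 where P01: "P\<^sub>0 \<in> Q" "(0, Suc n) \<in> P\<^sub>0" "P\<^sub>1 \<in> Q" "(1, Suc n) \<in> P\<^sub>1"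
    using partition_on_covers[OF p] by metis
  then have "(0, n) \<in> P\<^sub>0" "(1, n) \<in> P\<^sub>1"
    using split_division_row_piece[OF Q] assms(2,3) by auto
  then have "P\<^sub>0 = P" "P\<^sub>1 = P"
    using partition_on_part_eq[OF p] P P01 by blast+
  then show False
    using Q P01 unfolding split_divisions_def joined_def by auto
qed

lemma split_divisions_Suc_Suc_subset:
  assumes Q: "Q \<in> split_divisions k (Suc (Suc n))"
  shows "Q \<in> extend_division n {} {} {{(0, Suc n)}, {(1, Suc n)}} ` divisions (k - 2) (Suc n)
           \<union> extend_division n {(0, Suc n)} {} {{(1, Suc n)}} ` divisions (k - 1) (Suc n)
           \<union> extend_division n {} {(1, Suc n)} {{(0, Suc n)}} ` divisions (k - 1) (Suc n)
           \<union> extend_division n {(0, Suc n)} {(1, Suc n)} {} ` split_divisions k (Suc n)"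
proof -
  let ?C = "column (Suc n)" and ?A = "{(0::nat, Suc n)}" and ?B = "{(1::nat, Suc n)}"
  have Qd: "Q \<in> divisions k (Suc (Suc n))"
    using Q by (simp add: split_divisions_def)
  note attached = split_division_attached[OF Q] and N = split_division_column_pieces[OF Q]
  consider "?A \<in> Q" "?B \<in> Q" | "?A \<notin> Q" "?B \<in> Q" | "?A \<in> Q" "?B \<notin> Q" | "?A \<notin> Q" "?B \<notin> Q"
    by blast
  then show ?thesis
  proof cases
    case 1
    then have "\<forall>P\<in>Q. \<not> P \<subseteq> ?C \<longrightarrow> P \<inter> ?C = attach n {} {} P"
      using attached by simp
    then have "Q \<in> extend_division n {} {} {?A, ?B} ` divisions (k - 2) (Suc n)"
    proof (rule extend_restrict_image[OF Qd])
      show "{P \<in> Q. P \<subseteq> ?C} = {?A, ?B}"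
        using N 1 by auto
    qed (simp add: numeral_2_eq_2)
    then show ?thesis
      by blast
  next
    case 2
    then have "\<forall>P\<in>Q. \<not> P \<subseteq> ?C \<longrightarrow> P \<inter> ?C = attach n ?A {} P"
      using attached by simp
    then have "Q \<in> extend_division n ?A {} {?B} ` divisions (k - 1) (Suc n)"
    proof (rule extend_restrict_image[OF Qd])
      show "{P \<in> Q. P \<subseteq> ?C} = {?B}"
        using N 2 by auto
    qed simp
    then show ?thesis
      by blast
  next
    case 3
    then have "\<forall>P\<in>Q. \<not> P \<subseteq> ?C \<longrightarrow> P \<inter> ?C = attach n {} ?B P"
      using attached by simp
    then have "Q \<in> extend_division n {} ?B {?A} ` divisions (k - 1) (Suc n)"
    proof (rule extend_restrict_image[OF Qd])
      show "{P \<in> Q. P \<subseteq> ?C} = {?A}"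
        using N 3 by auto
    qed simp
    then show ?thesis
      by blast
  next
    case 4
    have "\<not> joined Q n"
      using split_division_not_joined[OF Q 4] .
    from 4 have "\<forall>P\<in>Q. \<not> P \<subseteq> ?C \<longrightarrow> P \<inter> ?C = attach n ?A ?B P"
      using attached by simp
    then have "Q \<in> extend_division n ?A ?B {} ` split_divisions k (Suc n)"
    proof (rule extend_restrict_image[OF Qd])
      show "{P \<in> Q. P \<subseteq> ?C} = {}"
        using N 4 by auto
    qed (use \<open>\<not> joined Q n\<close> in \<open>simp add: split_divisions_def joined_restrict_division_iff\<close>)
    then show ?thesis
      by blast
  qed
qed

lemma extend_row_images_disjoint:
  "extend_division n (column (Suc n)) {} {} ` divisions k (Suc n) \<inter>
     extend_division n {} (column (Suc n)) {} ` split_divisions k (Suc n) = {}"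
proof -
  let ?C = "column (Suc n)"
  have data: "extension_data n ?C {} {}" "extension_data n {} ?C {}"
    by (auto simp: extension_data_def column_def)
  have False if R: "R \<in> divisions k (Suc n)" and R': "R' \<in> split_divisions k (Suc n)"
    and eq: "extend_division n ?C {} {} R = extend_division n {} ?C {} R'" for R R'
  proof -
    have p: "partition_on (board (Suc n)) R" "partition_on (board (Suc n)) R'"
      using R R' unfolding divisions_def split_divisions_def by auto
    have "R = restrict_division n (extend_division n ?C {} {} R)"
      by (simp add: restrict_extend_division[OF p(1) data(1)])
    also have "\<dots> = R'"
      unfolding eq by (rule restrict_extend_division[OF p(2) data(2)])
    finally have "R = R'" .
    have "(0, n) \<in> board (Suc n)"
      by (simp add: board_def)
    then obtain P where P: "P \<in> R" "(0, n) \<in> P"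
      using partition_on_covers[OF p(1)] by blast
    have "(1, n) \<notin> P"
      using R' P \<open>R = R'\<close> unfolding split_divisions_def joined_def by auto
    then have "attach n ?C {} P = ?C" "attach n {} ?C P = {}"
      using P(2) by (simp_all add: attach_def)
    moreover have "P \<union> attach n ?C {} P \<in> extend_division n ?C {} {} R"
      "P \<union> attach n {} ?C P \<in> extend_division n {} ?C {} R'"
      using P(1) \<open>R = R'\<close> unfolding extend_division_def by blast+
    ultimately have "P \<union> ?C \<in> extend_division n ?C {} {} R" "P \<in> extend_division n ?C {} {} R"
      using eq by simp_all
    then have "P \<union> ?C = P"
      using partition_on_part_eq[OF partition_on_extend[OF p(1) data(1)], of "P \<union> ?C" P "(0, n)"] P(2)
      by blast
    then have "(0, Suc n) \<in> P"
      by (auto simp: column_def)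
    then show False
      using partition_on_part_subset[OF p(1) P(1)] by (auto simp: board_def)
  qed
  then show ?thesis
    by blast
qed

lemma card_joined_divisions_Suc_Suc:
  assumes "k \<ge> 1"
  shows "card (joined_divisions k (Suc (Suc n))) = d (k - 1) (Suc n) + d k (Suc n) + s k (Suc n)"
proof -
  let ?C = "column (Suc n)"
  let ?A = "extend_division n {} {} {?C} ` divisions (k - 1) (Suc n)"
    and ?B = "extend_division n ?C {} {} ` divisions k (Suc n)"
    and ?B' = "extend_division n {} ?C {} ` split_divisions k (Suc n)"
  have data: "extension_data n {} {} {?C}" "extension_data n ?C {} {}" "extension_data n {} ?C {}"
    by (auto simp: extension_data_def column_def)
  have split_sub: "split_divisions k (Suc n) \<subseteq> divisions k (Suc n)"
    by (auto simp: split_divisions_def)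
  have "?A \<subseteq> joined_divisions k (Suc (Suc n))"
    by (rule extend_image_subset_joined_divisions[OF order_refl data(1)]) (use assms in simp_all)
  moreover have "?B \<subseteq> joined_divisions k (Suc (Suc n))"
    by (rule extend_image_subset_joined_divisions[OF order_refl data(2)]) simp_all
  moreover have "?B' \<subseteq> joined_divisions k (Suc (Suc n))"
    by (rule extend_image_subset_joined_divisions[OF split_sub data(3)]) simp_all
  ultimately have "?A \<union> ?B \<union> ?B' \<subseteq> joined_divisions k (Suc (Suc n))"
    by (intro Un_least)
  moreover have "joined_divisions k (Suc (Suc n)) \<subseteq> ?A \<union> ?B \<union> ?B'"
    by (rule subsetI) (rule joined_divisions_Suc_Suc_subset)
  ultimately have "joined_divisions k (Suc (Suc n)) = ?A \<union> ?B \<union> ?B'"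
    by (rule subset_antisym[rotated])
  moreover have "?A \<inter> ?B = {}"
    by (rule extend_images_disjoint[where Z = ?C and j = "k - 1" and j' = k]) simp_all
  moreover have "?A \<inter> ?B' = {}"
    by (rule extend_images_disjoint[where Z = ?C and j = "k - 1" and j' = k]) (simp_all add: split_sub)
  moreover have "?B \<inter> ?B' = {}"
    by (rule extend_row_images_disjoint)
  moreover have "card ?A = d (k - 1) (Suc n)" "card ?B = d k (Suc n)" "card ?B' = s k (Suc n)"
    using card_extend_image[OF data(1) order_refl] card_extend_image[OF data(2) order_refl]
      card_extend_image[OF data(3) split_sub] unfolding d_def s_eq_card_split_divisions by auto
  moreover have "finite ?A" "finite ?B" "finite ?B'"
    using finite_divisions finite_subset[OF split_sub finite_divisions] by auto
  ultimately show ?thesis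
    by (simp add: card_Un_disjoint Int_Un_distrib2)
qed

lemma card_split_divisions_Suc_Suc:
  assumes "k \<ge> 2"
  shows "s k (Suc (Suc n)) = d (k - 2) (Suc n) + 2 * d (k - 1) (Suc n) + s k (Suc n)"
proof -
  let ?a = "{(0::nat, Suc n)}" and ?b = "{(1::nat, Suc n)}"
  let ?A = "extend_division n {} {} {?a, ?b} ` divisions (k - 2) (Suc n)"
    and ?B = "extend_division n ?a {} {?b} ` divisions (k - 1) (Suc n)"
    and ?B' = "extend_division n {} ?b {?a} ` divisions (k - 1) (Suc n)"
    and ?D = "extend_division n ?a ?b {} ` split_divisions k (Suc n)"
  have data: "extension_data n {} {} {?a, ?b}" "extension_data n ?a {} {?b}"
    "extension_data n {} ?b {?a}" "extension_data n ?a ?b {}"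
    by (auto simp: extension_data_def column_def disjoint_def)
  have split_sub: "split_divisions k (Suc n) \<subseteq> divisions k (Suc n)"
    by (auto simp: split_divisions_def)
  have "?A \<subseteq> split_divisions k (Suc (Suc n))"
    by (rule extend_image_subset_split_divisions[OF order_refl data(1)])
      (use assms in \<open>auto simp: column_def\<close>)
  moreover have "?B \<subseteq> split_divisions k (Suc (Suc n))"
    by (rule extend_image_subset_split_divisions[OF order_refl data(2)])
      (use assms in \<open>auto simp: column_def\<close>)
  moreover have "?B' \<subseteq> split_divisions k (Suc (Suc n))"
    by (rule extend_image_subset_split_divisions[OF order_refl data(3)])
      (use assms in \<open>auto simp: column_def\<close>)
  moreover have "?D \<subseteq> split_divisions k (Suc (Suc n))"
    by (rule extend_image_subset_split_divisions[OF split_sub data(4)])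
      (auto simp: column_def split_divisions_def)
  ultimately have "?A \<union> ?B \<union> ?B' \<union> ?D \<subseteq> split_divisions k (Suc (Suc n))"
    by (intro Un_least)
  moreover have "split_divisions k (Suc (Suc n)) \<subseteq> ?A \<union> ?B \<union> ?B' \<union> ?D"
    by (rule subsetI) (rule split_divisions_Suc_Suc_subset)
  ultimately have "split_divisions k (Suc (Suc n)) = ?A \<union> ?B \<union> ?B' \<union> ?D"
    by (rule subset_antisym[rotated])
  moreover have "?A \<inter> ?B = {}"
    by (rule extend_images_disjoint[where Z = ?a and j = "k - 2" and j' = "k - 1"]) (simp_all add: column_def)
  moreover have "?A \<inter> ?B' = {}"
    by (rule extend_images_disjoint[where Z = ?b and j = "k - 2" and j' = "k - 1"]) (simp_all add: column_def)
  moreover have "?A \<inter> ?D = {}"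
    by (rule extend_images_disjoint[where Z = ?a and j = "k - 2" and j' = k]) (simp_all add: column_def split_sub)
  moreover have "?B \<inter> ?B' = {}"
    by (rule extend_images_disjoint[where Z = ?b and j = "k - 1" and j' = "k - 1"]) (simp_all add: column_def)
  moreover have "?B \<inter> ?D = {}"
    by (rule extend_images_disjoint[where Z = ?b and j = "k - 1" and j' = k]) (simp_all add: column_def split_sub)
  moreover have "?B' \<inter> ?D = {}"
    by (rule extend_images_disjoint[where Z = ?a and j = "k - 1" and j' = k]) (simp_all add: column_def split_sub)
  moreover have "card ?A = d (k - 2) (Suc n)" "card ?B = d (k - 1) (Suc n)"
    "card ?B' = d (k - 1) (Suc n)" "card ?D = s k (Suc n)"
    using card_extend_image[OF data(1) order_refl] card_extend_image[OF data(2) order_refl]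
      card_extend_image[OF data(3) order_refl] card_extend_image[OF data(4) split_sub]
    unfolding d_def s_eq_card_split_divisions by auto
  moreover have "finite ?A" "finite ?B" "finite ?B'" "finite ?D"
    using finite_divisions finite_subset[OF split_sub finite_divisions] by auto
  ultimately show ?thesis
    unfolding s_eq_card_split_divisions by (simp add: card_Un_disjoint Int_Un_distrib2)
qed

lemma d_Suc_recurrence:
  assumes "k \<ge> 1" "n \<ge> 1"
  shows "d k (Suc n) = s k (Suc n) + d (k - 1) n + d k n + s k n"
proof -
  obtain m where "n = Suc m"
    using assms(2) by (cases n) auto
  then show ?thesis
    using card_joined_divisions_Suc_Suc[OF assms(1), of m] d_eq_card_joined_divisions_plus_s by simp
qed

lemma s_Suc_recurrence:
  assumes "k \<ge> 2" "n \<ge> 1"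
  shows "s k (Suc n) = s k n + d (k - 2) n + 2 * d (k - 1) n"
proof -
  obtain m where "n = Suc m"
    using assms(2) by (cases n) auto
  then show ?thesis
    using card_split_divisions_Suc_Suc[OF assms(1), of m] by simp
qed

lemma d_zero: "n \<ge> 1 \<Longrightarrow> d 0 n = 0"
proof -
  assume "n \<ge> 1"
  have "Q \<notin> divisions 0 n" for Q
  proof
    assume Q: "Q \<in> divisions 0 n"
    then have "Q = {}"
      using finite_division[OF Q] by (simp add: divisions_def)
    moreover have "(0, 0) \<in> board n"
      using \<open>n \<ge> 1\<close> by (simp add: board_def)
    moreover have "board n = \<Union>Q"
      using Q by (simp add: divisions_def partition_onD1)
    ultimately show False
      by simp
  qed
  then have "divisions 0 n = {}"
    by blast
  then show ?thesis
    by (simp add: d_def)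
qed

lemma s_one: "n \<ge> 1 \<Longrightarrow> s 1 n = 0"
proof -
  assume "n \<ge> 1"
  have "joined Q (n - 1)" if Q: "Q \<in> divisions 1 n" for Q
  proof -
    obtain P where "Q = {P}"
      using Q card_1_singletonE unfolding divisions_def by blast
    moreover have "board n = \<Union>Q"
      using Q by (simp add: divisions_def partition_onD1)
    moreover have "(0, n - 1) \<in> board n" "(1, n - 1) \<in> board n"
      using \<open>n \<ge> 1\<close> by (simp_all add: board_def)
    ultimately show ?thesis
      unfolding joined_def by simp
  qed
  then have "split_divisions 1 n = {}"
    unfolding split_divisions_def by blast
  then show ?thesis
    by (simp add: s_eq_card_split_divisions)
qed

lemma d_one_one_pos: "d 1 1 > 0"
proof -
  have "board 1 = column 0"
    by (auto simp: board_def column_def)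
  then have "{board 1} \<in> divisions 1 1"
    using is_piece_subset_column[of "board 1" 0] partition_on_space[of "board 1"]
    by (simp add: divisions_def column_def)
  then show ?thesis
    unfolding d_def using finite_divisions card_gt_0_iff by blast
qed

lemma d_one: "n \<ge> 1 \<Longrightarrow> d 1 n = d 1 1"
proof (induction n rule: dec_induct)
  case (step n)
  then show ?case
    using d_Suc_recurrence[of 1 n] d_zero s_one[of n] s_one[of "Suc n"] by simp
qed simp

lemma poly_seq_d_one: "poly_seq (\<lambda>n. real (d 1 n)) 0"
proof -
  have "poly_seq (\<lambda>_. real (d 1 1)) 0"
    using d_one_one_pos by (intro poly_seq_const) simp
  then show ?thesis
    by (rule poly_seq_cong) (metis d_one)
qed

lemma poly_seq_s_step:
  assumes k: "k \<ge> 2" and d_pred: "poly_seq (\<lambda>n. real (d (k - 1) n)) (2 * k - 4)"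
    and d_pred2: "k \<ge> 3 \<Longrightarrow> poly_seq (\<lambda>n. real (d (k - 2) n)) (2 * k - 6)"
  shows "poly_seq (\<lambda>n. real (s k n)) (2 * k - 3)"
proof -
  have two: "(2::real) > 0"
    by simp
  have increment: "poly_seq (\<lambda>n. real (d (k - 2) n) + 2 * real (d (k - 1) n)) (2 * k - 4)"
  proof (cases "k = 2")
    case True
    show ?thesis
      by (rule poly_seq_cong[OF poly_seq_scale[OF d_pred two]]) (simp_all add: True d_zero)
  next
    case False
    have "max (2 * k - 6) (2 * k - 4) = 2 * k - 4"
      by arith
    with poly_seq_add[OF d_pred2 poly_seq_scale[OF d_pred two]] show ?thesis
      using k False by simp
  qed
  have "real (s k (Suc n)) = real (s k n) + (real (d (k - 2) n) + 2 * real (d (k - 1) n))"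
    if "n \<ge> 1" for n
    using s_Suc_recurrence[OF k that] by simp
  moreover have "Suc (2 * k - 4) = 2 * k - 3"
    using k by arith
  ultimately show ?thesis
    using poly_seq_summation[OF _ increment] by simp
qed

lemma poly_seq_d_step:
  assumes k: "k \<ge> 2" and d_pred: "poly_seq (\<lambda>n. real (d (k - 1) n)) (2 * k - 4)"
    and s: "poly_seq (\<lambda>n. real (s k n)) (2 * k - 3)"
  shows "poly_seq (\<lambda>n. real (d k n)) (2 * k - 2)"
proof -
  have two: "(2::real) > 0"
    by simp
  have deg: "max (2 * k - 4) (2 * k - 3) = 2 * k - 3" "Suc (2 * k - 3) = 2 * k - 2"
    "max (2 * k - 2) (2 * k - 3) = 2 * k - 2"
    using k by arith+
  have increment: "poly_seq (\<lambda>n. real (d (k - 1) n) + 2 * real (s k n)) (2 * k - 3)"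
    using poly_seq_add[OF d_pred poly_seq_scale[OF s two]] unfolding deg(1) .
  have "real (d k (Suc n)) - real (s k (Suc n)) =
      (real (d k n) - real (s k n)) + (real (d (k - 1) n) + 2 * real (s k n))" if "n \<ge> 1" for n
    using d_Suc_recurrence[of k n] k that by simp
  from poly_seq_summation[OF this increment]
  have "poly_seq (\<lambda>n. real (d k n) - real (s k n)) (2 * k - 2)"
    unfolding deg(2) .
  from poly_seq_add[OF this s] show ?thesis
    unfolding deg(3) by simp
qed

lemma poly_seq_d_s:
  assumes "k \<ge> 1"
  shows "poly_seq (\<lambda>n. real (d k n)) (2 * k - 2) \<and>
         (k \<ge> 2 \<longrightarrow> poly_seq (\<lambda>n. real (s k n)) (2 * k - 3))"
  using assms
proof (induction k rule: less_induct)
  case (less k)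
  show ?case
  proof (cases "k = 1")
    case True
    then show ?thesis
      using poly_seq_d_one by simp
  next
    case False
    then have k: "k \<ge> 2"
      using less.prems by simp
    have "poly_seq (\<lambda>n. real (d (k - 1) n)) (2 * k - 4)"
      using less.IH[of "k - 1"] k by (simp add: diff_mult_distrib2)
    moreover have "poly_seq (\<lambda>n. real (d (k - 2) n)) (2 * k - 6)" if "k \<ge> 3"
      using less.IH[of "k - 2"] that by (simp add: diff_mult_distrib2)
    ultimately show ?thesis
      using poly_seq_s_step poly_seq_d_step k by blast
  qed
qed

theorem theorem3:
  shows "(\<forall>k::nat. k \<ge> 1 \<longrightarrow>
            (\<exists>D :: real poly. degree D = 2 * k - 2 \<and>
               (\<forall>n::nat. n \<ge> 1 \<longrightarrow> real (d k n) = poly D (real n))))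
       \<and> (\<forall>k::nat. k \<ge> 2 \<longrightarrow>
            (\<exists>S :: real poly. degree S = 2 * k - 3 \<and>
               (\<forall>n::nat. n \<ge> 1 \<longrightarrow> real (s k n) = poly S (real n))))"
proof (intro conjI allI impI)
  fix k :: nat
  assume "k \<ge> 1"
  then show "\<exists>D :: real poly. degree D = 2 * k - 2 \<and>
               (\<forall>n::nat. n \<ge> 1 \<longrightarrow> real (d k n) = poly D (real n))"
    using poly_seq_d_s unfolding poly_seq_def by blast
next
  fix k :: nat
  assume "k \<ge> 2"
  then show "\<exists>S :: real poly. degree S = 2 * k - 3 \<and>
               (\<forall>n::nat. n \<ge> 1 \<longrightarrow> real (s k n) = poly S (real n))"
    using poly_seq_d_s[of k] unfolding poly_seq_def by auto
qed

end
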